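(* Assume (FWW) for a flow $\Phi_t$ on $\mathbb{R}^n$ and a $k$-cone $C$. Let $K\subset\mathbb{R}^n$ be a compact invariant set and let $\mathbb{R}^n=E_y\oplus F_y$, $y\in K$, be a $k$-exponential separation of $(\Phi_t,D\Phi_t)$ along $K$ associated with $C$. Then there exists a constant $\delta''>0$ such that $d(v,C)>\delta''$ for every $v\in\bigcup_{y\in K}(F_y\cap S)$, where $S$ is the unit sphere of $\mathbb{R}^n$ and $d(v,C)=\inf_{w\in C}\|v-w\|$.
   Context: A closed set $C\subset\mathbb{R}^n$ is a $k$-cone if $lv\in C$ for all $v\in C$, $l\in\mathbb{R}$, and the maximal dimension of a linear subspace contained in $C$ is $k$. $C$ is $k$-solid if there is a $k$-dimensional subspace $W$ with $W\setminus\{0\}\subset\operatorname{Int}C$. Write $x\sim y$ if $x-y\in C$ and $x\approx y$ if $x-y\in\operatorname{Int}C$. A flow $\Phi_t$ is strongly monotone with respect to a $k$-solid cone $C$ if $x\sim y$ implies $\Phi_t(x)\sim\Phi_t(y)$ for $t\ge0$, and $x\ne y$, $x\sim y$ imply $\Phi_t(x)\approx\Phi_t(y)$ for $t>0$. Assumption (FWW): the flow $\Phi_t$ on $\mathbb{R}^n$ is $C^{1,\alpha}$-smooth ($C^1$ with locally $\alpha$-Hölder derivative, $\alpha\in(0,1]$), strongly monotone with respect to the $k$-cone $C$, and $D_x\Phi_t(C\setminus\{0\})\subset\operatorname{Int}C$ for $t>0$. A $k$-exponential separation along a compact invariant set $K$ associated with $C$ consists of continuous (in the Grassmannian gap metric)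 families of $k$-dimensional subspaces $E_x$ and $(n-k)$-dimensional subspaces $F_x$, $x\in K$, such that: $\mathbb{R}^n=E_x\oplus F_x$; $D_x\Phi_tE_x=E_{\Phi_t(x)}$, $D_x\Phi_tF_x\subset F_{\Phi_t(x)}$ for $t>0$; there are $M>0$, $0<\gamma<1$ with $\|D_x\Phi_tw\|\le M\gamma^t\|D_x\Phi_tv\|$ for all $x\in K$, unit $w\in F_x$, unit $v\in E_x$, $t\ge0$; and $E_x\subset\operatorname{Int}C\cup\{0\}$, $F_x\cap C=\{0\}$. *)

theory Defs
  imports "HOL-Analysis.Analysis"
begin

definition k_cone :: "'a::euclidean_space set \<Rightarrow> nat \<Rightarrow> bool" where
  "k_cone C k \<longleftrightarrow> closed C \<and> (\<forall>v\<in>C. \<forall>l::real. l *\<^sub>R v \<in> C) \<and>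
     (\<exists>W. subspace W \<and> W \<subseteq> C \<and> dim W = k) \<and>
     (\<forall>W. subspace W \<and> W \<subseteq> C \<longrightarrow> dim W \<le> k)"

definition k_solid :: "'a::euclidean_space set \<Rightarrow> nat \<Rightarrow> bool" where
  "k_solid C k \<longleftrightarrow> (\<exists>W. subspace W \<and> dim W = k \<and> W - {0} \<subseteq> interior C)"

definition is_flow :: "(real \<Rightarrow> 'a::euclidean_space \<Rightarrow> 'a) \<Rightarrow> bool" where
  "is_flow \<Phi> \<longleftrightarrow> (\<forall>x. \<Phi> 0 x = x) \<and> (\<forall>s t x. \<Phi> (s + t) x = \<Phi> s (\<Phi> t x)) \<and>
     continuous_on UNIV (\<lambda>(t, x). \<Phi> t x)"

definition C1_alpha_flow ::
  "real \<Rightarrow> (real \<Rightarrow> 'a::euclidean_space \<Rightarrow> 'a) \<Rightarrow> (real \<Rightarrow> 'a \<Rightarrow> 'a \<Rightarrow>\<^sub>L 'a) \<Rightarrow> bool" where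
  "C1_alpha_flow \<alpha> \<Phi> D \<longleftrightarrow>
     (\<forall>t x. (\<Phi> t has_derivative blinfun_apply (D t x)) (at x)) \<and>
     (\<forall>t. continuous_on UNIV (D t)) \<and>
     (\<forall>t x0. \<exists>r>0. \<exists>L. \<forall>x\<in>ball x0 r. \<forall>y\<in>ball x0 r.
         norm (D t x - D t y) \<le> L * dist x y powr \<alpha>)"

definition strongly_monotone ::
  "(real \<Rightarrow> 'a::euclidean_space \<Rightarrow> 'a) \<Rightarrow> 'a set \<Rightarrow> bool" where
  "strongly_monotone \<Phi> C \<longleftrightarrow>
     (\<forall>x y t. x - y \<in> C \<and> t \<ge> 0 \<longrightarrow> \<Phi> t x - \<Phi> t y \<in> C) \<and>
     (\<forall>x y t. x \<noteq> y \<and> x - y \<in> C \<and> t > 0 \<longrightarrow> \<Phi> t x - \<Phi> t y \<in> interior C)"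

definition FWW ::
  "real \<Rightarrow> (real \<Rightarrow> 'a::euclidean_space \<Rightarrow> 'a) \<Rightarrow> (real \<Rightarrow> 'a \<Rightarrow> 'a \<Rightarrow>\<^sub>L 'a) \<Rightarrow> 'a set \<Rightarrow> nat \<Rightarrow> bool" where
  "FWW \<alpha> \<Phi> D C k \<longleftrightarrow> 0 < \<alpha> \<and> \<alpha> \<le> 1 \<and> is_flow \<Phi> \<and> C1_alpha_flow \<alpha> \<Phi> D \<and>
     k_cone C k \<and> k_solid C k \<and> strongly_monotone \<Phi> C \<and>
     (\<forall>t x v. t > 0 \<and> v \<in> C - {0} \<longrightarrow> D t x v \<in> interior C)"

definition half_gap :: "'a::euclidean_space set \<Rightarrow> 'a set \<Rightarrow> real" where
  "half_gap U V = (if U \<inter> sphere 0 1 = {} then 0 else (SUP u\<in>U \<inter> sphere 0 1. infdist u V))"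

definition gap :: "'a::euclidean_space set \<Rightarrow> 'a set \<Rightarrow> real" where
  "gap U V = max (half_gap U V) (half_gap V U)"

definition gap_continuous_on :: "'a::euclidean_space set \<Rightarrow> ('a \<Rightarrow> 'a set) \<Rightarrow> bool" where
  "gap_continuous_on K E \<longleftrightarrow>
     (\<forall>y\<in>K. \<forall>\<epsilon>>0. \<exists>\<delta>>0. \<forall>z\<in>K. dist z y < \<delta> \<longrightarrow> gap (E z) (E y) < \<epsilon>)"

definition invariant_set :: "(real \<Rightarrow> 'a \<Rightarrow> 'a) \<Rightarrow> 'a set \<Rightarrow> bool" where
  "invariant_set \<Phi> K \<longleftrightarrow> (\<forall>t. \<Phi> t ` K = K)"

definition exp_separation ::
  "(real \<Rightarrow> 'a::euclidean_space \<Rightarrow> 'a) \<Rightarrow> (real \<Rightarrow> 'a \<Rightarrow> 'a \<Rightarrow>\<^sub>L 'a) \<Rightarrow> 'a set \<Rightarrow> nat \<Rightarrow> 'a set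
    \<Rightarrow> ('a \<Rightarrow> 'a set) \<Rightarrow> ('a \<Rightarrow> 'a set) \<Rightarrow> bool" where
  "exp_separation \<Phi> D C k K E F \<longleftrightarrow>
     (\<forall>x\<in>K. subspace (E x) \<and> dim (E x) = k \<and> subspace (F x) \<and> dim (F x) = DIM('a) - k) \<and>
     gap_continuous_on K E \<and> gap_continuous_on K F \<and>
     (\<forall>x\<in>K. E x + F x = UNIV \<and> E x \<inter> F x = {0}) \<and>
     (\<forall>x\<in>K. \<forall>t>0. blinfun_apply (D t x) ` E x = E (\<Phi> t x) \<and>
                   blinfun_apply (D t x) ` F x \<subseteq> F (\<Phi> t x)) \<and>
     (\<exists>M>0. \<exists>\<gamma>. 0 < \<gamma> \<and> \<gamma> < 1 \<and>
        (\<forall>x\<in>K. \<forall>w\<in>F x. \<forall>v\<in>E x. \<forall>t\<ge>0. norm w = 1 \<and> norm v = 1 \<longrightarrow>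
            norm (D t x w) \<le> M * \<gamma> powr t * norm (D t x v))) \<and>
     (\<forall>x\<in>K. E x \<subseteq> interior C \<union> {0} \<and> F x \<inter> C = {0})"

end

theory Submission
  imports Defs
begin

text \<open>Gap continuity of F and compactness of K make the unit-sphere bundle
  {(y, v). y \<in> K, v \<in> F y, norm v = 1} compact. On it the distance of v to the
  closed cone C is continuous, and positive because F y \<inter> C = {0}; hence it is
  bounded below by a positive constant.\<close>

lemma infdist_le_gap:
  fixes U V :: "'a::euclidean_space set"
  assumes "subspace V" "u \<in> U" "norm u = 1"
  shows "infdist u V \<le> gap U V"
proof -
  have "bdd_above ((\<lambda>u. infdist u V) ` (U \<inter> sphere 0 1))"
  proof (rule bdd_aboveI2)
    fix w assume "w \<in> U \<inter> sphere 0 1"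
    then show "infdist w V \<le> 1"
      using infdist_le[OF subspace_0[OF \<open>subspace V\<close>], of w] by simp
  qed
  then have "infdist u V \<le> half_gap U V"
    unfolding half_gap_def using assms by (auto intro!: cSUP_upper)
  then show ?thesis unfolding gap_def by linarith
qed

lemma gap_continuous_on_infdist_tendsto:
  assumes "gap_continuous_on K F" "y \<in> K" "subspace (F y)"
    and "\<And>n. z n \<in> K" "\<And>n. u n \<in> F (z n) \<inter> sphere 0 1" "z \<longlonglongrightarrow> y"
  shows "(\<lambda>n. infdist (u n) (F y)) \<longlonglongrightarrow> 0"
proof (rule tendstoI)
  fix e :: real assume "e > 0"
  then obtain d where "d > 0" and d: "\<And>z'. z' \<in> K \<Longrightarrow> dist z' y < d \<Longrightarrow> gap (F z') (F y) < e"
    using assms(1,2) unfolding gap_continuous_on_def by blast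
  have "eventually (\<lambda>n. dist (z n) y < d) sequentially"
    using \<open>z \<longlonglongrightarrow> y\<close> \<open>d > 0\<close> by (rule tendstoD)
  then show "eventually (\<lambda>n. dist (infdist (u n) (F y)) 0 < e) sequentially"
  proof eventually_elim
    case (elim n)
    have "infdist (u n) (F y) \<le> gap (F (z n)) (F y)"
      using assms(3,5) by (intro infdist_le_gap) auto
    also have "\<dots> < e" using d[OF assms(4) elim] .
    finally show ?case by (simp add: infdist_nonneg)
  qed
qed

lemma closed_unit_sphere_bundle:
  fixes F :: "'a::euclidean_space \<Rightarrow> 'a set"
  assumes "closed K" "gap_continuous_on K F" "\<And>y. y \<in> K \<Longrightarrow> subspace (F y)"
  shows "closed (SIGMA y:K. F y \<inter> sphere 0 1)"
  unfolding closed_sequential_limits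
proof (intro allI impI, elim conjE)
  fix p :: "nat \<Rightarrow> 'a \<times> 'a" and l
  assume p: "\<forall>n. p n \<in> (SIGMA y:K. F y \<inter> sphere 0 1)" and "p \<longlonglongrightarrow> l"
  have pK: "fst (p n) \<in> K" and pF: "snd (p n) \<in> F (fst (p n)) \<inter> sphere 0 1" for n
    using p by (metis SigmaE2 prod.collapse)+
  obtain y v where l: "l = (y, v)" by fastforce
  have z: "(\<lambda>n. fst (p n)) \<longlonglongrightarrow> y" and u: "(\<lambda>n. snd (p n)) \<longlonglongrightarrow> v"
    using tendsto_fst[OF \<open>p \<longlonglongrightarrow> l\<close>] tendsto_snd[OF \<open>p \<longlonglongrightarrow> l\<close>] l by simp_all
  have "y \<in> K"
    using pK by (intro closed_sequentially[OF assms(1) _ z]) auto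
  have "norm v = 1"
    using tendsto_norm[OF u] pF by (auto intro: LIMSEQ_unique)
  have "(\<lambda>n. infdist (snd (p n)) (F y)) \<longlonglongrightarrow> 0"
    using assms(2) \<open>y \<in> K\<close> assms(3) pK pF z
    by (intro gap_continuous_on_infdist_tendsto[where z = "\<lambda>n. fst (p n)"]) auto
  moreover have "(\<lambda>n. infdist (snd (p n)) (F y)) \<longlonglongrightarrow> infdist v (F y)"
    using u by (intro tendsto_infdist tendsto_const)
  ultimately have "infdist v (F y) = 0" using LIMSEQ_unique by metis
  then have "v \<in> F y"
    using in_closed_iff_infdist_zero[OF closed_subspace] subspace_0 assms(3)[OF \<open>y \<in> K\<close>] by blast
  then show "l \<in> (SIGMA y:K. F y \<inter> sphere 0 1)"
    using \<open>y \<in> K\<close> \<open>norm v = 1\<close> l by simp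
qed

lemma compact_unit_sphere_bundle:
  fixes F :: "'a::euclidean_space \<Rightarrow> 'a set"
  assumes "compact K" "gap_continuous_on K F" "\<And>y. y \<in> K \<Longrightarrow> subspace (F y)"
  shows "compact (SIGMA y:K. F y \<inter> sphere 0 1)"
proof -
  have "(SIGMA y:K. F y \<inter> sphere 0 1) = (K \<times> sphere 0 1) \<inter> (SIGMA y:K. F y \<inter> sphere 0 1)"
    by auto
  also have "compact \<dots>"
    using assms by (intro compact_Int_closed compact_Times closed_unit_sphere_bundle compact_imp_closed)
      auto
  finally show ?thesis .
qed

lemma compact_continuous_pos_lower_bound:
  fixes f :: "'a::topological_space \<Rightarrow> real"
  assumes "compact S" "continuous_on S f" "\<And>x. x \<in> S \<Longrightarrow> f x > 0"
  shows "\<exists>\<delta>>0. \<forall>x\<in>S. f x > \<delta>"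
proof (cases "S = {}")
  case True
  then show ?thesis by (intro exI[of _ 1]) simp
next
  case False
  then obtain x0 where "x0 \<in> S" and min: "\<And>x. x \<in> S \<Longrightarrow> f x0 \<le> f x"
    using continuous_attains_inf[OF assms(1) _ assms(2)] by blast
  show ?thesis
    using assms(3)[OF \<open>x0 \<in> S\<close>] min by (intro exI[of _ "f x0 / 2"]) fastforce
qed

lemma k_cone_closed: "k_cone C k \<Longrightarrow> closed C"
  unfolding k_cone_def by blast

lemma k_cone_zero: "k_cone C k \<Longrightarrow> 0 \<in> C"
  unfolding k_cone_def using subspace_0 by blast

theorem lemma3p4:
  fixes \<Phi> :: "real \<Rightarrow> 'a::euclidean_space \<Rightarrow> 'a"
    and D :: "real \<Rightarrow> 'a \<Rightarrow> 'a \<Rightarrow>\<^sub>L 'a"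
    and C K :: "'a set" and k :: nat and \<alpha> :: real
    and E F :: "'a \<Rightarrow> 'a set"
  assumes "FWW \<alpha> \<Phi> D C k"
    and "compact K" and "invariant_set \<Phi> K"
    and "exp_separation \<Phi> D C k K E F"
  shows "\<exists>\<delta>>0. \<forall>y\<in>K. \<forall>v\<in>F y \<inter> sphere 0 1. infdist v C > \<delta>"
proof -
  have "k_cone C k" using assms(1) unfolding FWW_def by blast
  have F_subspace: "\<And>y. y \<in> K \<Longrightarrow> subspace (F y)"
    and "gap_continuous_on K F"
    and F_transversal: "\<And>y. y \<in> K \<Longrightarrow> F y \<inter> C = {0}"
    using assms(4) unfolding exp_separation_def by simp_all
  let ?S = "SIGMA y:K. F y \<inter> sphere 0 1"
  have "compact ?S"
    using assms(2) \<open>gap_continuous_on K F\<close> F_subspace by (rule compact_unit_sphere_bundle)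
  moreover have "continuous_on ?S (\<lambda>p. infdist (snd p) C)"
    by (intro continuous_on_infdist continuous_intros)
  moreover have "infdist (snd p) C > 0" if p: "p \<in> ?S" for p
  proof (rule infdist_pos_not_in_closed)
    obtain y v where "p = (y, v)" "y \<in> K" "v \<in> F y" "norm v = 1"
      using p by (cases p) auto
    with F_transversal[of y] show "snd p \<notin> C"
      by (metis IntI norm_zero singletonD snd_conv zero_neq_one)
  qed (use k_cone_closed[OF \<open>k_cone C k\<close>] k_cone_zero[OF \<open>k_cone C k\<close>] in auto)
  ultimately have "\<exists>\<delta>>0. \<forall>p\<in>?S. infdist (snd p) C > \<delta>"
    by (rule compact_continuous_pos_lower_bound)
  then show ?thesis by fastforce
qed

end
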